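(* For $n=3$ agents and $3$ items with the unit-range normalization, every ordinal mechanism $J$ (deterministic or randomized) satisfies $ar(J)\le 2/3$.
   Context: Agents $N=\{1,2,3\}$, items $M=\{1,2,3\}$, outcomes are bijections $\mu$ ($O$ the set of outcomes). Unit-range valuation functions: injective $u_i:M\to\mathbb R$ with $\max_j u_i(j)=1$ and $\min_j u_i(j)=0$; $V^3$ the set of profiles. A mechanism maps each profile to a distribution over $O$; it is ordinal if its output distribution is unchanged when any one agent's valuation function is replaced by another inducing the same ordering of the items. $ar(J)=\inf_{\mathbf u\in V^3}\mathbb E[\sum_i u_i(J(\mathbf u)_i)]/\max_{\mu\in O}\sum_i u_i(\mu_i)$. *)

theory Defs
  imports "HOL-Probability.Probability" "HOL-Library.Numeral_Type"
begin

text \<open>Agents N = \{1,2,3\} and items M = \{1,2,3\} are both modelled by the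
  three-element type 3 (elements 0, 1, 2).\<close>

type_synonym agent = "3"
type_synonym item = "3"
type_synonym valuation = "item \<Rightarrow> real"
type_synonym profile = "agent \<Rightarrow> valuation"
type_synonym outcome = "agent \<Rightarrow> item"

definition outcomes :: "outcome set" where
  "outcomes = {\<mu>. bij \<mu>}"

definition unit_range :: "valuation \<Rightarrow> bool" where
  "unit_range u \<longleftrightarrow> inj u \<and> Max (range u) = 1 \<and> Min (range u) = 0"

definition profiles :: "profile set" where
  "profiles = {u. \<forall>i. unit_range (u i)}"

definition mechanism :: "(profile \<Rightarrow> outcome pmf) \<Rightarrow> bool" where
  "mechanism J \<longleftrightarrow> (\<forall>u\<in>profiles. set_pmf (J u) \<subseteq> outcomes)"

definition ordinal :: "(profile \<Rightarrow> outcome pmf) \<Rightarrow> bool" where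
  "ordinal J \<longleftrightarrow> (\<forall>u\<in>profiles. \<forall>i v. unit_range v \<and>
      (\<forall>a b. v a < v b \<longleftrightarrow> u i a < u i b) \<longrightarrow> J (u(i := v)) = J u)"

definition social_welfare :: "profile \<Rightarrow> outcome \<Rightarrow> real" where
  "social_welfare u \<mu> = (\<Sum>i\<in>UNIV. u i (\<mu> i))"

definition opt_welfare :: "profile \<Rightarrow> real" where
  "opt_welfare u = Max (social_welfare u ` outcomes)"

definition approx_ratio :: "(profile \<Rightarrow> outcome pmf) \<Rightarrow> real" where
  "approx_ratio J = (INF u\<in>profiles.
      measure_pmf.expectation (J u) (social_welfare u) / opt_welfare u)"

end

theory Submission
  imports Defs
begin

(* Consider profiles in which every agent ranks the items in the same
   order 0 > 1 > 2: agent i values item 0 at 1, item 2 at 0 and item 1 at some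
   m i in (0,1).  An ordinal mechanism cannot distinguish these profiles, so it
   uses one fixed lottery p over outcomes on all of them.  In every outcome some
   agent receives item 1, hence the three probabilities "agent i receives item 1"
   under p sum to 1 and some agent j receives item 1 with probability at most 1/3.
   Now let agent j value item 1 at 1 - d and everybody else at d.  If q_j is the
   probability that j receives item 1, the expected welfare of p is
   1 + d + (1 - 2d) q_j <= (4 + d)/3, while giving item 1 to j
   yields welfare 2 - d; the ratio is at most 2/3 + d/(2 - d) <= 2/3 + d, and
   letting d tend to 0 gives the bound 2/3. *)

lemma UNIV_3: "(UNIV::3 set) = {0, 1, 2}"
proof -
  have "card {0, 1, 2::3} = card (UNIV::3 set)" by simp
  thus ?thesis by (metis card_subset_eq finite subset_UNIV)
qed

lemma three_cases: "(x::3) = 0 \<or> x = 1 \<or> x = 2"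
  using UNIV_3 by blast

lemma receivers_count:
  fixes \<mu> :: outcome
  assumes "bij \<mu>"
  shows "(\<Sum>i\<in>UNIV. of_bool (\<mu> i = k) :: real) = 1"
proof -
  have "\<And>i. (\<mu> i = k) = (i = inv \<mu> k)"
    using assms by (metis bij_inv_eq_iff)
  thus ?thesis by simp
qed

section \<open>Ordinal mechanisms only depend on the agents' rankings\<close>

definition same_ranking :: "valuation \<Rightarrow> valuation \<Rightarrow> bool" where
  "same_ranking v w \<longleftrightarrow> (\<forall>a b. v a < v b \<longleftrightarrow> w a < w b)"

text \<open>Replacing all three valuations, one agent at a time, by valuations with the
  same rankings does not change the output of an ordinal mechanism.\<close>
lemma ordinal_same_rankings:
  assumes J: "ordinal J" and u: "u \<in> profiles" and v: "v \<in> profiles"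
    and rk: "\<And>i. same_ranking (v i) (u i)"
  shows "J v = J u"
proof -
  have step: "J (w(i := v i)) = J w \<and> w(i := v i) \<in> profiles"
    if w: "w \<in> profiles" "w i = u i" for w i
  proof -
    have "unit_range (v i)" using v by (simp add: profiles_def)
    thus ?thesis
      using J w rk[of i] by (auto simp: ordinal_def same_ranking_def profiles_def)
  qed
  define u1 where "u1 = u(0 := v 0)"
  define u2 where "u2 = u1(1 := v 1)"
  have v_eq: "v = u2(2 := v 2)"
  proof
    fix i show "v i = (u2(2 := v 2)) i"
      using three_cases[of i] by (auto simp: u1_def u2_def)
  qed
  have first: "J u1 = J u" "u1 \<in> profiles"
    using step[of u 0] u by (simp_all add: u1_def)
  have second: "J u2 = J u1" "u2 \<in> profiles"
    using step[of u1 1] first by (simp_all add: u1_def u2_def)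
  have "J (u2(2 := v 2)) = J u2"
    using step[of u2 2] second by (simp add: u1_def u2_def)
  thus ?thesis using first second v_eq by simp
qed

section \<open>Profiles with a common ranking\<close>

definition mid_valuation :: "real \<Rightarrow> valuation" where
  "mid_valuation x = (\<lambda>k. if k = 0 then 1 else if k = 1 then x else 0)"

definition mid_profile :: "(agent \<Rightarrow> real) \<Rightarrow> profile" where
  "mid_profile m = (\<lambda>i. mid_valuation (m i))"

lemma unit_range_mid_valuation:
  assumes "0 < x" "x < 1"
  shows "unit_range (mid_valuation x)"
proof -
  have rng: "range (mid_valuation x) = {1, x, 0}"
    unfolding UNIV_3 by (auto simp: mid_valuation_def)
  have "inj (mid_valuation x)"
  proof (rule injI)
    fix a b assume "mid_valuation x a = mid_valuation x b"
    thus "a = b" using three_cases[of a] three_cases[of b] assms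
      by (auto simp: mid_valuation_def)
  qed
  thus ?thesis using assms by (simp add: unit_range_def rng max_def min_def)
qed

lemma mid_profile_in_profiles:
  "(\<And>i. 0 < m i \<and> m i < 1) \<Longrightarrow> mid_profile m \<in> profiles"
  by (simp add: profiles_def mid_profile_def unit_range_mid_valuation)

lemma same_ranking_mid_valuation:
  assumes "0 < x" "x < 1" "0 < y" "y < 1"
  shows "same_ranking (mid_valuation x) (mid_valuation y)"
  unfolding same_ranking_def
proof (intro allI)
  fix a b :: item
  show "mid_valuation x a < mid_valuation x b \<longleftrightarrow> mid_valuation y a < mid_valuation y b"
    using three_cases[of a] three_cases[of b] assms by (auto simp: mid_valuation_def)
qed

lemma ordinal_constant_on_mid_profiles:
  assumes "ordinal J" "\<And>i. 0 < m i \<and> m i < 1" "\<And>i. 0 < m' i \<and> m' i < 1"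
  shows "J (mid_profile m) = J (mid_profile m')"
  using assms by (intro ordinal_same_rankings mid_profile_in_profiles)
    (auto simp: mid_profile_def intro: same_ranking_mid_valuation)

text \<open>The agent receiving item 0 contributes 1, the one receiving item 2
  contributes 0, and the receiver of item 1 contributes its value m i.\<close>
lemma welfare_mid_profile:
  assumes "bij \<mu>"
  shows "social_welfare (mid_profile m) \<mu> = 1 + (\<Sum>i\<in>UNIV. m i * of_bool (\<mu> i = 1))"
proof -
  have "\<And>k. mid_valuation x k = of_bool (k = 0) + x * of_bool (k = 1)" for x
    by (simp add: mid_valuation_def)
  hence "social_welfare (mid_profile m) \<mu>
      = (\<Sum>i\<in>UNIV. of_bool (\<mu> i = 0)) + (\<Sum>i\<in>UNIV. m i * of_bool (\<mu> i = 1))"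
    by (simp add: social_welfare_def mid_profile_def sum.distrib)
  thus ?thesis using receivers_count[OF assms] by simp
qed

definition alloc_prob :: "outcome pmf \<Rightarrow> agent \<Rightarrow> item \<Rightarrow> real" where
  "alloc_prob p i k = measure_pmf.prob p {\<mu>. \<mu> i = k}"

lemma alloc_prob_expectation:
  "alloc_prob p i k = measure_pmf.expectation p (\<lambda>\<mu>. of_bool (\<mu> i = k))"
proof -
  have "(\<lambda>\<mu>. of_bool (\<mu> i = k)) = (indicator {\<mu>::outcome. \<mu> i = k} :: _ \<Rightarrow> real)"
    by (auto simp: indicator_def)
  thus ?thesis by (simp add: alloc_prob_def)
qed

lemma integrable_outcomes: "integrable (measure_pmf p) (f :: outcome \<Rightarrow> real)"
  by (rule integrable_measure_pmf_finite) simp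

lemma alloc_prob_sum:
  assumes "set_pmf p \<subseteq> outcomes"
  shows "(\<Sum>i\<in>UNIV. alloc_prob p i k) = 1"
proof -
  have "(\<Sum>i\<in>UNIV. alloc_prob p i k)
      = measure_pmf.expectation p (\<lambda>\<mu>. \<Sum>i\<in>UNIV. of_bool (\<mu> i = k))"
    unfolding alloc_prob_expectation
    by (rule Bochner_Integration.integral_sum[symmetric, OF integrable_outcomes])
  also have "\<dots> = measure_pmf.expectation p (\<lambda>_. 1)"
    using assms by (intro integral_cong_AE AE_pmfI receivers_count) (auto simp: outcomes_def)
  finally show ?thesis by simp
qed

lemma exists_small_alloc_prob:
  assumes "set_pmf p \<subseteq> outcomes"
  obtains j where "alloc_prob p j k \<le> 1/3"
proof -
  have "(\<Sum>i\<in>UNIV. alloc_prob p i k) = alloc_prob p 0 k + alloc_prob p 1 k + alloc_prob p 2 k"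
    unfolding UNIV_3 by simp
  hence "alloc_prob p 0 k + alloc_prob p 1 k + alloc_prob p 2 k = 1"
    using alloc_prob_sum[OF assms] by simp
  hence "alloc_prob p 0 k \<le> 1/3 \<or> alloc_prob p 1 k \<le> 1/3 \<or> alloc_prob p 2 k \<le> 1/3"
    by linarith
  thus ?thesis using that by blast
qed

lemma expected_welfare_mid_profile:
  assumes "set_pmf p \<subseteq> outcomes"
  shows "measure_pmf.expectation p (social_welfare (mid_profile m))
       = 1 + (\<Sum>i\<in>UNIV. m i * alloc_prob p i 1)"
proof -
  have "measure_pmf.expectation p (social_welfare (mid_profile m))
      = measure_pmf.expectation p (\<lambda>\<mu>. 1 + (\<Sum>i\<in>UNIV. m i * of_bool (\<mu> i = 1)))"
    using assms welfare_mid_profile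
    by (intro integral_cong_AE) (auto simp: AE_measure_pmf_iff outcomes_def)
  also have "\<dots> = 1 + (\<Sum>i\<in>UNIV. m i * alloc_prob p i 1)"
    unfolding alloc_prob_expectation
    by (subst Bochner_Integration.integral_add, (rule integrable_outcomes)+,
        subst Bochner_Integration.integral_sum, rule integrable_outcomes) simp
  finally show ?thesis .
qed

lemma welfare_nonneg:
  assumes "u \<in> profiles"
  shows "0 \<le> social_welfare u \<mu>"
proof -
  have "0 \<le> u i k" for i k
  proof -
    have "Min (range (u i)) = 0" using assms by (simp add: profiles_def unit_range_def)
    moreover have "Min (range (u i)) \<le> u i k" by (rule Min_le) auto
    ultimately show ?thesis by simp
  qed
  thus ?thesis unfolding social_welfare_def by (simp add: sum_nonneg)
qed

lemma welfare_le_opt: "\<mu> \<in> outcomes \<Longrightarrow> social_welfare u \<mu> \<le> opt_welfare u"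
  unfolding opt_welfare_def by (rule Max_ge) simp_all

text \<open>Welfare ratios are nonnegative, so the infimum defining approx_ratio is
  bounded below; it is therefore below any value approached by the ratios.\<close>
lemma approx_ratio_le:
  assumes "\<And>e. 0 < e \<Longrightarrow> \<exists>u\<in>profiles.
      measure_pmf.expectation (J u) (social_welfare u) / opt_welfare u \<le> r + e"
  shows "approx_ratio J \<le> r"
proof (rule field_le_epsilon)
  fix e :: real assume "0 < e"
  then obtain u where u: "u \<in> profiles"
    and le: "measure_pmf.expectation (J u) (social_welfare u) / opt_welfare u \<le> r + e"
    using assms by blast
  have "0 \<le> measure_pmf.expectation (J v) (social_welfare v) / opt_welfare v"
    if "v \<in> profiles" for v
  proof -
    have "0 \<le> social_welfare v id" using welfare_nonneg[OF that] .
    also have "\<dots> \<le> opt_welfare v" by (rule welfare_le_opt) (simp add: outcomes_def)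
    finally show ?thesis using welfare_nonneg[OF that] by (simp add: integral_nonneg)
  qed
  hence bdd: "bdd_below ((\<lambda>v. measure_pmf.expectation (J v) (social_welfare v)
                                 / opt_welfare v) ` profiles)"
    by (intro bdd_belowI[where m = 0]) auto
  show "approx_ratio J \<le> r + e"
    unfolding approx_ratio_def by (rule cINF_lower2[OF bdd u]) (use le in simp)
qed

definition critical_profile :: "agent \<Rightarrow> real \<Rightarrow> profile" where
  "critical_profile j d = mid_profile (\<lambda>i. if i = j then 1 - d else d)"

text \<open>Giving the middle item to agent j achieves welfare 2 - d.\<close>
lemma opt_welfare_critical_profile: "2 - d \<le> opt_welfare (critical_profile j d)"
proof -
  define \<sigma> where "\<sigma> = (\<lambda>i::agent. i + (1 - j))"
  have bij: "bij \<sigma>" unfolding \<sigma>_def by (rule bij_plus_right)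
  have "\<And>i. (\<sigma> i = 1) = (i = j)" by (auto simp: \<sigma>_def)
  hence "social_welfare (critical_profile j d) \<sigma> = 2 - d"
    by (simp add: critical_profile_def welfare_mid_profile[OF bij])
  moreover have "social_welfare (critical_profile j d) \<sigma> \<le> opt_welfare (critical_profile j d)"
    using bij by (intro welfare_le_opt) (simp add: outcomes_def)
  ultimately show ?thesis by simp
qed

lemma expected_welfare_critical_profile:
  assumes "set_pmf p \<subseteq> outcomes"
  shows "measure_pmf.expectation p (social_welfare (critical_profile j d))
       = 1 + d + (1 - 2 * d) * alloc_prob p j 1"
proof -
  have "(\<Sum>i\<in>UNIV. (if i = j then 1 - d else d) * alloc_prob p i 1)
      = (\<Sum>i\<in>UNIV. d * alloc_prob p i 1 + (1 - 2 * d) * (of_bool (i = j) * alloc_prob p i 1))"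
    by (rule sum.cong) (auto simp: algebra_simps)
  also have "\<dots> = d + (1 - 2 * d) * alloc_prob p j 1"
    using alloc_prob_sum[OF assms]
    by (simp add: sum.distrib flip: sum_distrib_left)
  finally show ?thesis
    unfolding critical_profile_def expected_welfare_mid_profile[OF assms] by simp
qed

lemma ratio_critical_profile:
  assumes p: "set_pmf p \<subseteq> outcomes" and q: "alloc_prob p j 1 \<le> 1/3"
    and d: "0 < d" "d \<le> 1/4"
  shows "measure_pmf.expectation p (social_welfare (critical_profile j d))
       / opt_welfare (critical_profile j d) \<le> 2/3 + d"
proof -
  let ?E = "measure_pmf.expectation p (social_welfare (critical_profile j d))"
  have E: "?E = 1 + d + (1 - 2 * d) * alloc_prob p j 1"
    by (rule expected_welfare_critical_profile[OF p])
  have "0 \<le> alloc_prob p j 1" by (simp add: alloc_prob_def)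
  hence E_nonneg: "0 \<le> ?E" using E d by simp
  have "(1 - 2 * d) * alloc_prob p j 1 \<le> (1 - 2 * d) * (1/3)"
    using q d by (intro mult_left_mono) auto
  hence E_le: "?E \<le> (4 + d) / 3" using E by simp
  have pos: "0 < 2 - d" using d by simp
  have opt: "2 - d \<le> opt_welfare (critical_profile j d)"
    by (rule opt_welfare_critical_profile)
  have "?E / opt_welfare (critical_profile j d) \<le> ?E / (2 - d)"
    using opt pos E_nonneg by (intro divide_left_mono mult_pos_pos) auto
  also have "\<dots> \<le> ((4 + d) / 3) / (2 - d)"
    using E_le pos by (intro divide_right_mono) auto
  also have "\<dots> \<le> 2/3 + d"
  proof -
    have "d * d \<le> d" using d by (simp add: mult_left_le)
    hence "(4 + d) / 3 \<le> (2/3 + d) * (2 - d)" by (simp add: field_simps)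
    thus ?thesis unfolding pos_divide_le_eq[OF pos] .
  qed
  finally show ?thesis .
qed

theorem mainTheorem13:
  fixes J :: "profile \<Rightarrow> outcome pmf"
  assumes "mechanism J" and "ordinal J"
  shows "approx_ratio J \<le> 2 / 3"
proof (rule approx_ratio_le)
  define p where "p = J (mid_profile (\<lambda>_. 1/2))"
  have p: "set_pmf p \<subseteq> outcomes"
    using assms(1) mid_profile_in_profiles[of "\<lambda>_. 1/2"]
    by (simp add: mechanism_def p_def)
  obtain j where j: "alloc_prob p j 1 \<le> 1/3"
    using exists_small_alloc_prob[OF p] .
  fix e :: real assume "0 < e"
  define d where "d = min (1/4) e"
  have d: "0 < d" "d \<le> 1/4" "d \<le> e" using \<open>0 < e\<close> by (auto simp: d_def)
  have valid: "\<And>i. 0 < (if i = j then 1 - d else d) \<and> (if i = j then 1 - d else d) < 1"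
    using d by auto
  have "J (critical_profile j d) = p"
    unfolding critical_profile_def p_def
    using assms(2) valid by (rule ordinal_constant_on_mid_profiles) simp
  moreover have "critical_profile j d \<in> profiles"
    unfolding critical_profile_def using valid by (rule mid_profile_in_profiles)
  ultimately show "\<exists>u\<in>profiles.
      measure_pmf.expectation (J u) (social_welfare u) / opt_welfare u \<le> 2/3 + e"
    using ratio_critical_profile[OF p j d(1,2)] d(3) by force
qed

end
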